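(* Let $S$ be a Clifford semigroup. Then the semigroup $T\mathbb{R}(S)$ of all normal cones in the category $\mathbb{R}(S)$ of principal right ideals of $S$ is anti-isomorphic to $S$, and the normal dual $N^*\mathbb{R}(S)$ of $\mathbb{R}(S)$ is isomorphic (as a normal category) to $\mathbb{L}(S)$.
   Context: A Clifford semigroup is a semigroup that is a semilattice of groups; equivalently, a regular semigroup whose idempotents are central. $E(S)$ denotes the set of idempotents. The category $\mathbb{L}(S)$ has objects $Se$, $e\in E(S)$, morphisms $\rho(e,u,f)\colon Se\to Sf$, $x\mapsto xu$, $u\in eSf$, composed left to right. The category $\mathbb{R}(S)$ has objects $eS$, $e\in E(S)$, morphisms $\lambda(e,u,f)\colon eS\to fS$, $x\mapsto ux$, for $u\in fSe$ (determined by domain, codomain and function), with composition $\lambda(e,u,f)\lambda(f,v,h)=\lambda(e,vu,h)$ and inclusions $\lambda(e,e,f)$ for $eS\subseteq fS$. A normal cone with apex $c$ in $\mathbb{R}(S)$ is a family $\gamma(a)\colon a\to c$ indexed by objects such that (inclusion $a\to b$)$\gamma(b)=\gamma(a)$ whenever $a\subseteq b$ and some $\gamma(a)$ is an isomorphism. The epimorphic component of $\lambda(e,u,f)$ is $\lambda(e,u,g)$ with $g\in E(S)$, $gS=uS$; $T\mathbb{R}(S)$ is the semigroup of normal cones with product $(\gamma\cdot\delta)(a)=\gamma(a)\,\delta(c_\gamma)^\circ$, $c_\gamma$ the apex of $\gamma$. For $\gamma$ with apex $c$ and an epimorphism $h\colon c\to c'$, $\gamma\ast h$ is the cone $a\mapsto\gamma(a)h$.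 The normal dual $N^*\mathbb{R}(S)$ is the category whose objects are the functors $H(\gamma;-)\colon\mathbb{R}(S)\to\mathbf{Set}$, $\gamma\in T\mathbb{R}(S)$, with $H(\gamma;d)=\{\gamma\ast f^\circ : f\colon c_\gamma\to d\}$ and $H(\gamma;g)\colon\gamma\ast f^\circ\mapsto\gamma\ast(fg)^\circ$, and whose morphisms are natural transformations; it carries a natural normal category structure. *)

theory Defs
  imports "HOL-Library.FuncSet"
begin

(* The semigroup S is the whole type 'a :: semigroup_mult. *)

definition idem :: "'a::semigroup_mult \<Rightarrow> bool" where
  "idem e \<longleftrightarrow> e * e = e"

definition clifford_semigroup :: "'a::semigroup_mult itself \<Rightarrow> bool" where
  "clifford_semigroup T \<longleftrightarrow>
     (\<forall>x::'a. \<exists>y. x * y * x = x) \<and> (\<forall>e::'a. \<forall>x. idem e \<longrightarrow> e * x = x * e)"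

definition rId :: "'a::semigroup_mult \<Rightarrow> 'a set" where
  "rId u = {u * s | s. True}"

definition lId :: "'a::semigroup_mult \<Rightarrow> 'a set" where
  "lId u = {s * u | s. True}"

(* morphisms of the concrete categories: (domain, codomain, function restricted to domain) *)
type_synonym 'a mor = "'a set \<times> 'a set \<times> ('a \<Rightarrow> 'a)"
type_synonym 'a cone = "'a set \<Rightarrow> 'a mor"

definition msrc :: "'a mor \<Rightarrow> 'a set" where "msrc m = fst m"
definition mtgt :: "'a mor \<Rightarrow> 'a set" where "mtgt m = fst (snd m)"
definition mfun :: "'a mor \<Rightarrow> 'a \<Rightarrow> 'a" where "mfun m = snd (snd m)"

(* composition, written left to right *)
definition mcomp :: "'a mor \<Rightarrow> 'a mor \<Rightarrow> 'a mor" where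
  "mcomp m n = (msrc m, mtgt n, restrict (mfun n \<circ> mfun m) (msrc m))"

definition minc :: "'a set \<Rightarrow> 'a set \<Rightarrow> 'a mor" where
  "minc A B = (A, B, restrict id A)"

definition lam :: "'a::semigroup_mult \<Rightarrow> 'a \<Rightarrow> 'a \<Rightarrow> 'a mor" where
  "lam e u f = (rId e, rId f, restrict (\<lambda>x. u * x) (rId e))"

definition rho :: "'a::semigroup_mult \<Rightarrow> 'a \<Rightarrow> 'a \<Rightarrow> 'a mor" where
  "rho e u f = (lId e, lId f, restrict (\<lambda>x. x * u) (lId e))"

definition R_obj :: "'a::semigroup_mult set set" where
  "R_obj = {rId e | e. idem e}"

definition R_hom :: "'a::semigroup_mult set \<Rightarrow> 'a set \<Rightarrow> 'a mor set" where
  "R_hom A B = {lam e u f | e u f. idem e \<and> idem f \<and> (\<exists>s. u = f * s * e)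
                  \<and> A = rId e \<and> B = rId f}"

definition R_mor :: "'a::semigroup_mult mor set" where
  "R_mor = (\<Union>A\<in>R_obj. \<Union>B\<in>R_obj. R_hom A B)"

definition R_iso :: "'a::semigroup_mult mor \<Rightarrow> bool" where
  "R_iso m \<longleftrightarrow> (\<exists>A\<in>R_obj. \<exists>B\<in>R_obj. \<exists>n. m \<in> R_hom A B \<and> n \<in> R_hom B A
                  \<and> mcomp m n = minc A A \<and> mcomp n m = minc B B)"

definition normal_cone :: "'a::semigroup_mult cone \<Rightarrow> 'a set \<Rightarrow> bool" where
  "normal_cone \<gamma> c \<longleftrightarrow> c \<in> R_obj
     \<and> (\<forall>a. a \<notin> R_obj \<longrightarrow> \<gamma> a = undefined)
     \<and> (\<forall>a\<in>R_obj. \<gamma> a \<in> R_hom a c)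
     \<and> (\<forall>a\<in>R_obj. \<forall>b\<in>R_obj. a \<subseteq> b \<longrightarrow> mcomp (minc a b) (\<gamma> b) = \<gamma> a)
     \<and> (\<exists>a\<in>R_obj. R_iso (\<gamma> a))"

definition TR :: "'a::semigroup_mult cone set" where
  "TR = {\<gamma>. \<exists>c. normal_cone \<gamma> c}"

definition apex :: "'a::semigroup_mult cone \<Rightarrow> 'a set" where
  "apex \<gamma> = (THE c. normal_cone \<gamma> c)"

definition epi_comp :: "'a::semigroup_mult mor \<Rightarrow> 'a mor" where
  "epi_comp m = (THE m'. \<exists>e u f g. idem e \<and> idem f \<and> idem g \<and> (\<exists>s. u = f * s * e)
                   \<and> m = lam e u f \<and> rId g = rId u \<and> m' = lam e u g)"

definition cone_mult :: "'a::semigroup_mult cone \<Rightarrow> 'a cone \<Rightarrow> 'a cone" where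
  "cone_mult \<gamma> \<delta> = (\<lambda>a. if a \<in> R_obj then mcomp (\<gamma> a) (epi_comp (\<delta> (apex \<gamma>))) else undefined)"

definition cone_star :: "'a::semigroup_mult cone \<Rightarrow> 'a mor \<Rightarrow> 'a cone" where
  "cone_star \<gamma> h = (\<lambda>a. if a \<in> R_obj then mcomp (\<gamma> a) h else undefined)"

definition Hset :: "'a::semigroup_mult cone \<Rightarrow> 'a set \<Rightarrow> 'a cone set" where
  "Hset \<gamma> d = {cone_star \<gamma> (epi_comp f) | f. f \<in> R_hom (apex \<gamma>) d}"

definition Hmap :: "'a::semigroup_mult cone \<Rightarrow> 'a mor \<Rightarrow> 'a cone \<Rightarrow> 'a cone" where
  "Hmap \<gamma> g = restrict
     (\<lambda>x. cone_star \<gamma> (epi_comp (mcomp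
            (SOME f. f \<in> R_hom (apex \<gamma>) (msrc g) \<and> x = cone_star \<gamma> (epi_comp f)) g)))
     (Hset \<gamma> (msrc g))"

(* a Set-valued functor on R(S): (object part, morphism part) *)
type_synonym 'a nobj = "('a set \<Rightarrow> 'a cone set) \<times> ('a mor \<Rightarrow> 'a cone \<Rightarrow> 'a cone)"
(* a natural transformation: (source functor, target functor, components) *)
type_synonym 'a nmor = "'a nobj \<times> 'a nobj \<times> ('a set \<Rightarrow> 'a cone \<Rightarrow> 'a cone)"

definition Hfun :: "'a::semigroup_mult cone \<Rightarrow> 'a nobj" where
  "Hfun \<gamma> = ((\<lambda>d. if d \<in> R_obj then Hset \<gamma> d else undefined),
              (\<lambda>g. if g \<in> R_mor then Hmap \<gamma> g else undefined))"

definition N_obj :: "'a::semigroup_mult nobj set" where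
  "N_obj = Hfun ` TR"

definition N_hom :: "'a::semigroup_mult nobj \<Rightarrow> 'a nobj \<Rightarrow> 'a nmor set" where
  "N_hom F G = {(F, G, \<sigma>) | \<sigma>.
      (\<forall>d. d \<notin> R_obj \<longrightarrow> \<sigma> d = undefined)
    \<and> (\<forall>d\<in>R_obj. \<sigma> d \<in> extensional (fst F d) \<and> \<sigma> d \<in> fst F d \<rightarrow> fst G d)
    \<and> (\<forall>d\<in>R_obj. \<forall>d'\<in>R_obj. \<forall>g\<in>R_hom d d'. \<forall>x\<in>fst F d.
          snd G g (\<sigma> d x) = \<sigma> d' (snd F g x))}"

definition N_mor :: "'a::semigroup_mult nmor set" where
  "N_mor = (\<Union>F\<in>N_obj. \<Union>G\<in>N_obj. N_hom F G)"

(* composition of natural transformations, left to right *)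
definition N_comp :: "'a::semigroup_mult nmor \<Rightarrow> 'a nmor \<Rightarrow> 'a nmor" where
  "N_comp s t = (fst s, fst (snd t),
     \<lambda>d. if d \<in> R_obj then restrict (snd (snd t) d \<circ> snd (snd s) d) (fst (fst s) d) else undefined)"

(* normal category structure on N*R(S): inclusions are the natural transformations
   all of whose components are set inclusions *)
definition N_le :: "'a::semigroup_mult nobj \<Rightarrow> 'a nobj \<Rightarrow> bool" where
  "N_le F G \<longleftrightarrow> (\<forall>d\<in>R_obj. fst F d \<subseteq> fst G d)"

definition N_inc :: "'a::semigroup_mult nobj \<Rightarrow> 'a nobj \<Rightarrow> 'a nmor" where
  "N_inc F G = (F, G, \<lambda>d. if d \<in> R_obj then restrict id (fst F d) else undefined)"

definition L_obj :: "'a::semigroup_mult set set" where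
  "L_obj = {lId e | e. idem e}"

definition L_hom :: "'a::semigroup_mult set \<Rightarrow> 'a set \<Rightarrow> 'a mor set" where
  "L_hom A B = {rho e u f | e u f. idem e \<and> idem f \<and> (\<exists>s. u = e * s * f)
                  \<and> A = lId e \<and> B = lId f}"

definition L_mor :: "'a::semigroup_mult mor set" where
  "L_mor = (\<Union>A\<in>L_obj. \<Union>B\<in>L_obj. L_hom A B)"

definition normal_cat_iso :: "('a::semigroup_mult set \<Rightarrow> 'a nobj) \<Rightarrow> ('a mor \<Rightarrow> 'a nmor) \<Rightarrow> bool" where
  "normal_cat_iso FO FM \<longleftrightarrow>
      bij_betw FO L_obj N_obj \<and> bij_betw FM L_mor N_mor
    \<and> (\<forall>A\<in>L_obj. \<forall>B\<in>L_obj. \<forall>m\<in>L_hom A B. FM m \<in> N_hom (FO A) (FO B))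
    \<and> (\<forall>A\<in>L_obj. \<forall>B\<in>L_obj. \<forall>C\<in>L_obj. \<forall>m\<in>L_hom A B. \<forall>n\<in>L_hom B C.
          FM (mcomp m n) = N_comp (FM m) (FM n))
    \<and> (\<forall>A\<in>L_obj. \<forall>B\<in>L_obj. (A \<subseteq> B \<longleftrightarrow> N_le (FO A) (FO B))
          \<and> (A \<subseteq> B \<longrightarrow> FM (minc A B) = N_inc (FO A) (FO B)))"

end

theory Submission
  imports Defs
begin

text \<open>In a Clifford semigroup every \<open>x\<close> has an inverse \<open>x'\<close> in its \<open>\<H>\<close>-class, and
  \<open>x x' = x' x\<close> is a central idempotent; hence isomorphic principal right ideals are equal and
  every isomorphism of \<open>\<R>(S)\<close> is left translation by a unit of some maximal subgroup.
  Comparing the components of a normal cone on the intersection \<open>egS\<close> of two objects \<open>eS\<close>, \<open>gS\<close>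
  shows that each normal cone is left translation \<open>x \<mapsto> u x\<close> by a unique \<open>u\<close>, and composing
  such cones multiplies the translating elements in the opposite order: \<open>T\<R>(S) \<cong> S\<^sup>o\<^sup>p\<close>.
  Through this identification \<open>H(\<gamma>; d)\<close> for the cone of an idempotent \<open>e\<close> becomes \<open>d \<inter> Se\<close>,
  and by the Yoneda lemma the natural transformations \<open>H(e; -) \<Rightarrow> H(f; -)\<close> are exactly the
  right translations by \<open>u \<in> eSf\<close>, i.e. the morphisms \<open>\<rho>(e, u, f)\<close> of \<open>\<L>(S)\<close>.\<close>

text \<open>\<open>ginv x\<close> is the inverse of \<open>x\<close> in the maximal subgroup containing \<open>x\<close>, whose identity
  is \<open>gunit x\<close>.\<close>

definition ginv :: "'a::semigroup_mult \<Rightarrow> 'a" where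
  "ginv x = (let y = (SOME y. x * y * x = x) in y * x * y)"

definition gunit :: "'a::semigroup_mult \<Rightarrow> 'a" where
  "gunit x = x * ginv x"

definition cone_of :: "'a::semigroup_mult \<Rightarrow> 'a cone" where
  "cone_of u = (\<lambda>a. if a \<in> R_obj then (a, rId (gunit u), restrict (\<lambda>x. u * x) a) else undefined)"

lemma mcomp_restrict:
  assumes "f ` A \<subseteq> B"
  shows "mcomp (A, B, restrict f A) (B', C, restrict g B) = (A, C, restrict (g \<circ> f) A)"
  using assms unfolding mcomp_def msrc_def mtgt_def mfun_def
  by (simp add: restrict_compose_right restrict_compose_left)

locale clifford =
  fixes S :: "'a::semigroup_mult itself"
  assumes clifford: "clifford_semigroup S"
begin

section \<open>Clifford semigroups\<close>

lemma idem_central: "idem (e::'a) \<Longrightarrow> e * x = x * e"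
  using clifford unfolding clifford_semigroup_def by blast

lemma regular: "\<exists>y. (x::'a) * y * x = x"
  using clifford unfolding clifford_semigroup_def by blast

lemma ginv:
  fixes x :: 'a
  shows ginv_inner: "x * ginv x * x = x"
    and ginv_outer: "ginv x * x * ginv x = ginv x"
    and ginv_commute: "x * ginv x = ginv x * x"
proof -
  define y where "y = (SOME y. x * y * x = x)"
  have y: "x * y * x = x" unfolding y_def using regular by (rule someI_ex)
  have ginv_y: "ginv x = y * x * y" unfolding ginv_def y_def Let_def by simp
  have "idem (x * y)" "idem (y * x)" unfolding idem_def using y by (metis mult.assoc)+
  \<comment> \<open>both idempotents are central, so each absorbs the other: \<open>x y = y x x y = y x\<close>\<close>
  then have "x * y = y * x" using y by (metis idem_central mult.assoc)
  then show "x * ginv x * x = x" "ginv x * x * ginv x = ginv x" "x * ginv x = ginv x * x"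
    unfolding ginv_y using y by (metis mult.assoc)+
qed

lemma idem_gunit: "idem (gunit (x::'a))"
  unfolding idem_def gunit_def by (metis mult.assoc ginv_inner)

lemma gunit_mult_left: "gunit (x::'a) * x = x"
  unfolding gunit_def by (metis mult.assoc ginv_inner)

lemma mult_gunit_right: "(x::'a) * gunit x = x"
  unfolding gunit_def by (metis ginv_inner ginv_commute mult.assoc)

lemma gunit_mult_ginv: "gunit (x::'a) * ginv x = ginv x"
  unfolding gunit_def by (metis ginv_outer ginv_commute)

lemma ginv_mult_gunit: "ginv (x::'a) * gunit x = ginv x"
  unfolding gunit_def by (metis mult.assoc ginv_outer)

lemma ginv_mult: "ginv (x::'a) * x = gunit x"
  unfolding gunit_def using ginv_commute[of x] by simp

lemma gunit_unique:
  assumes "idem (g::'a)" "g * v = v" "v * w = g"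
  shows "gunit v = g"
proof -
  have "gunit v * g = g"
    using assms(3) gunit_mult_left[of v] by (metis mult.assoc)
  moreover have "g * gunit v = gunit v"
    using assms(2) unfolding gunit_def by (metis mult.assoc)
  ultimately show ?thesis using idem_central[OF assms(1), of "gunit v"] by simp
qed

lemma gunit_idem: "idem (e::'a) \<Longrightarrow> gunit e = e"
  using gunit_unique[of e e e] unfolding idem_def by simp

lemma idem_mult: "idem (e::'a) \<Longrightarrow> idem f \<Longrightarrow> idem (e * f)"
  unfolding idem_def by (metis idem_central idem_def mult.assoc)

lemma mem_rId_idem: "idem (e::'a) \<Longrightarrow> x \<in> rId e \<longleftrightarrow> e * x = x"
  unfolding rId_def idem_def by (auto; metis mult.assoc)

lemma mem_lId_idem: "idem (e::'a) \<Longrightarrow> x \<in> lId e \<longleftrightarrow> x * e = x"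
  unfolding lId_def idem_def by (auto; metis mult.assoc)

lemma lId_eq_rId: "idem (e::'a) \<Longrightarrow> lId e = rId e"
  by (auto simp: mem_rId_idem mem_lId_idem idem_central)

lemma idem_in_rId: "idem (e::'a) \<Longrightarrow> e \<in> rId e"
  by (simp add: mem_rId_idem idem_def)

lemma rId_idem_inj: "idem (e::'a) \<Longrightarrow> idem f \<Longrightarrow> rId e = rId f \<Longrightarrow> e = f"
  by (metis idem_in_rId mem_rId_idem idem_central)

lemma lId_idem_inj: "idem (e::'a) \<Longrightarrow> idem f \<Longrightarrow> lId e = lId f \<Longrightarrow> e = f"
  using rId_idem_inj lId_eq_rId by metis

lemma rId_mult_subset: "rId ((a::'a) * b) \<subseteq> rId a"
  unfolding rId_def by (auto simp: mult.assoc)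

lemma rId_gunit: "rId (gunit (x::'a)) = rId x"
  using rId_mult_subset[of x "ginv x"] rId_mult_subset[of "gunit x" x]
  unfolding gunit_def by (simp add: gunit_mult_left[unfolded gunit_def])

section \<open>The categories of principal ideals\<close>

lemma R_objI: "idem (e::'a) \<Longrightarrow> rId e \<in> R_obj"
  unfolding R_obj_def by blast

lemma R_objE:
  assumes "(a::'a set) \<in> R_obj"
  obtains e where "idem e" "a = rId e"
  using assms unfolding R_obj_def by blast

lemma msrc_lam [simp]: "msrc (lam e u f) = rId e"
  unfolding lam_def msrc_def by simp

lemma mfun_lam: "x \<in> rId e \<Longrightarrow> mfun (lam e u f) x = u * x"
  unfolding lam_def mfun_def by simp

lemma lam_inj:
  assumes "idem (e::'a)" "idem e'" "idem f" "idem f'" "u * e = u" "u' * e' = u'"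
    and "lam e u f = lam e' u' f'"
  shows "e = e' \<and> u = u' \<and> f = f'"
proof -
  have "rId e = rId e'" "rId f = rId f'"
    and fun_eq: "restrict (\<lambda>x. u * x) (rId e) = restrict (\<lambda>x. u' * x) (rId e')"
    using assms(7) unfolding lam_def by auto
  then have "e = e'" "f = f'" using rId_idem_inj assms(1-4) by blast+
  moreover have "u * e = u' * e" using fun_cong[OF fun_eq, of e] idem_in_rId[OF assms(1)] \<open>e = e'\<close>
    by simp
  ultimately show ?thesis using assms(5,6) by simp
qed

lemma R_hom_rIdE:
  assumes "idem (e::'a)" "idem h" "m \<in> R_hom (rId e) (rId h)"
  obtains v where "m = lam e v h" "h * v = v" "v * e = v"
proof -
  obtain e' u f s where "idem e'" "idem f" "u = f * s * e'" "m = lam e' u f"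
      "rId e = rId e'" "rId h = rId f"
    using assms(3) unfolding R_hom_def by blast
  moreover from calculation have "e' = e" "f = h" using rId_idem_inj assms by metis+
  ultimately show ?thesis using that assms unfolding idem_def by (metis mult.assoc)
qed

lemma R_homI:
  assumes "idem (e::'a)" "idem h" "h * v = v" "v * e = v"
  shows "lam e v h \<in> R_hom (rId e) (rId h)"
proof -
  have "v = h * v * e" using assms(3,4) by (simp add: mult.assoc)
  then show ?thesis unfolding R_hom_def using assms(1,2) by blast
qed

lemma R_hom_msrc_mtgt: "m \<in> R_hom a c \<Longrightarrow> msrc m = a \<and> mtgt m = (c::'a set)"
  unfolding R_hom_def lam_def msrc_def mtgt_def by auto

lemma R_morI: "d \<in> R_obj \<Longrightarrow> d' \<in> R_obj \<Longrightarrow> (g::'a mor) \<in> R_hom d d' \<Longrightarrow> g \<in> R_mor"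
  unfolding R_mor_def by blast

lemma R_morE:
  assumes "(g::'a mor) \<in> R_mor"
  obtains h k t where "idem h" "idem k" "g = lam h t k" "k * t = t" "t * h = t"
proof -
  obtain h k where "idem h" "idem k" "g \<in> R_hom (rId h) (rId k)"
    using assms unfolding R_mor_def by (auto elim!: R_objE)
  then show ?thesis using that by (metis R_hom_rIdE)
qed

lemma mcomp_lam:
  assumes "f * u = (u::'a)"
  shows "mcomp (lam e u f) (lam f v h) = lam e (v * u) h"
proof -
  have "(\<lambda>x. u * x) ` rId e \<subseteq> rId f"
    using assms unfolding rId_def by (auto, metis mult.assoc)
  then show ?thesis unfolding lam_def
    by (simp add: mcomp_restrict comp_def flip: mult.assoc)
qed

lemma lam_idem: "idem (g::'a) \<Longrightarrow> lam g g g = minc (rId g) (rId g)"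
  unfolding lam_def minc_def by (auto intro: restrict_ext simp: mem_rId_idem)

lemma epi_comp_lam:
  assumes "idem (e::'a)" "idem f" "f * u = u" "u * e = u"
  shows "epi_comp (lam e u f) = lam e u (gunit u)"
  unfolding epi_comp_def
proof (rule the_equality)
  show "\<exists>e' u' f' g. idem e' \<and> idem f' \<and> idem g \<and> (\<exists>s. u' = f' * s * e') \<and>
      lam e u f = lam e' u' f' \<and> rId g = rId u' \<and> lam e u (gunit u) = lam e' u' g"
    using assms idem_gunit rId_gunit by (metis mult.assoc)
next
  fix m' assume "\<exists>e' u' f' g. idem e' \<and> idem f' \<and> idem g \<and> (\<exists>s. u' = f' * s * e') \<and>
      lam e u f = lam e' u' f' \<and> rId g = rId u' \<and> m' = lam e' u' g"
  then obtain e' u' f' g s where "idem e'" "idem f'" "idem g" "u' = f' * s * e'"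
    "lam e u f = lam e' u' f'" "rId g = rId u'" "m' = lam e' u' g" by blast
  moreover from calculation have "e = e' \<and> u = u'"
    using lam_inj[OF assms(1) _ assms(2) _ assms(4)] unfolding idem_def by (metis mult.assoc)
  moreover from calculation have "g = gunit u"
    using rId_idem_inj idem_gunit rId_gunit by metis
  ultimately show "m' = lam e u (gunit u)" by simp
qed

lemma R_obj_mult_right: "d \<in> R_obj \<Longrightarrow> w \<in> d \<Longrightarrow> w * u \<in> (d::'a set)"
  by (auto elim!: R_objE simp: mem_rId_idem mult.assoc[symmetric])

text \<open>Morphisms of \<open>\<R>(S)\<close> are left translations, so they commute with right translations;
  this is what makes \<open>right_transl\<close> natural.\<close>

lemma mfun_R_hom:
  assumes "g \<in> R_hom d d'" "w \<in> (d::'a set)"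
  shows "mfun g w \<in> d'" "mfun g (w * u) = mfun g w * u"
proof -
  obtain h k t where hk: "idem h" "idem k" "d = rId h" "d' = rId k" "g = lam h t k" "k * t = t"
    using assms(1) unfolding R_hom_def idem_def by (auto simp flip: mult.assoc)
  moreover have "w * u \<in> rId h" using assms(2) R_obj_mult_right R_objI hk(1,3) by blast
  ultimately have "mfun g w = t * w" "mfun g (w * u) = t * (w * u)"
    using assms(2) mfun_lam by simp_all
  then show "mfun g w \<in> d'" "mfun g (w * u) = mfun g w * u"
    using hk(2,4,6) mem_rId_idem by (simp_all add: mult.assoc[symmetric])
qed

lemma L_objI: "idem (e::'a) \<Longrightarrow> lId e \<in> L_obj"
  unfolding L_obj_def by blast

lemma L_objE:
  assumes "(A::'a set) \<in> L_obj"
  obtains e where "idem e" "A = lId e"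
  using assms unfolding L_obj_def by blast

lemma L_hom_lIdE:
  assumes "idem (e::'a)" "idem f" "m \<in> L_hom (lId e) (lId f)"
  obtains u where "m = rho e u f" "e * u = u" "u * f = u"
proof -
  obtain e' u f' s where "idem e'" "idem f'" "u = e' * s * f'" "m = rho e' u f'"
      "lId e = lId e'" "lId f = lId f'"
    using assms(3) unfolding L_hom_def by blast
  moreover from calculation have "e' = e" "f' = f" using lId_idem_inj assms by metis+
  ultimately show ?thesis using that assms unfolding idem_def by (metis mult.assoc)
qed

lemma L_homI:
  assumes "idem (e::'a)" "idem f" "e * u = u" "u * f = u"
  shows "rho e u f \<in> L_hom (lId e) (lId f)"
proof -
  have "u = e * u * f" using assms(3,4) by (simp add: mult.assoc)
  then show ?thesis unfolding L_hom_def using assms(1,2) by blast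
qed

lemma L_morE:
  assumes "(m::'a mor) \<in> L_mor"
  obtains e f u where "idem e" "idem f" "m = rho e u f" "e * u = u" "u * f = u"
proof -
  obtain e f where "idem e" "idem f" "m \<in> L_hom (lId e) (lId f)"
    using assms unfolding L_mor_def by (auto elim!: L_objE)
  then show ?thesis using that by (metis L_hom_lIdE)
qed

lemma mcomp_rho:
  assumes "u * f = (u::'a)"
  shows "mcomp (rho e u f) (rho f v h) = rho e (u * v) h"
proof -
  have "(\<lambda>x. x * u) ` lId e \<subseteq> lId f"
    using assms unfolding lId_def by (auto, metis mult.assoc)
  then show ?thesis unfolding rho_def by (simp add: mcomp_restrict comp_def mult.assoc)
qed

lemma minc_lId: "idem (e::'a) \<Longrightarrow> minc (lId e) (lId f) = rho e e f"
  unfolding minc_def rho_def by (auto intro: restrict_ext simp: mem_lId_idem)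

section \<open>Normal cones\<close>

lemma cone_of_rId: "idem (e::'a) \<Longrightarrow> cone_of u (rId e) = lam e (u * e) (gunit u)"
  unfolding cone_of_def lam_def
  by (auto simp: R_objI mem_rId_idem mult.assoc intro: restrict_ext)

lemma cone_of_in_R_hom: "a \<in> R_obj \<Longrightarrow> cone_of (u::'a) a \<in> R_hom a (rId (gunit u))"
proof (elim R_objE)
  fix e assume "idem e" "a = rId e"
  moreover have "gunit u * (u * e) = u * e" by (simp add: gunit_mult_left flip: mult.assoc)
  moreover have "u * e * e = u * e" using \<open>idem e\<close> unfolding idem_def by (simp add: mult.assoc)
  ultimately show ?thesis using R_homI[OF \<open>idem e\<close> idem_gunit] cone_of_rId by simp
qed

lemma R_iso_cone_of_gunit: "R_iso (cone_of u (rId (gunit (u::'a))))"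
proof -
  let ?g = "gunit u"
  have iso: "cone_of u (rId ?g) = lam ?g u ?g"
    using cone_of_rId[OF idem_gunit] mult_gunit_right by simp
  have "mcomp (lam ?g u ?g) (lam ?g (ginv u) ?g) = minc (rId ?g) (rId ?g)"
    by (simp add: mcomp_lam gunit_mult_left ginv_mult lam_idem idem_gunit)
  moreover have "mcomp (lam ?g (ginv u) ?g) (lam ?g u ?g) = minc (rId ?g) (rId ?g)"
    by (simp add: mcomp_lam gunit_mult_ginv lam_idem idem_gunit gunit_def[symmetric])
  moreover have "lam ?g u ?g \<in> R_hom (rId ?g) (rId ?g)"
    "lam ?g (ginv u) ?g \<in> R_hom (rId ?g) (rId ?g)"
    using R_homI idem_gunit gunit_mult_left mult_gunit_right gunit_mult_ginv ginv_mult_gunit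
    by blast+
  ultimately show ?thesis unfolding R_iso_def iso using R_objI[OF idem_gunit] by blast
qed

lemma normal_coneD:
  assumes "normal_cone \<gamma> c"
  shows "c \<in> R_obj" "\<And>a. a \<notin> R_obj \<Longrightarrow> \<gamma> a = undefined"
    "\<And>a. a \<in> R_obj \<Longrightarrow> \<gamma> a \<in> R_hom a c"
    "\<And>a b. a \<in> R_obj \<Longrightarrow> b \<in> R_obj \<Longrightarrow> a \<subseteq> b \<Longrightarrow> mcomp (minc a b) (\<gamma> b) = \<gamma> a"
    "\<exists>a\<in>R_obj. R_iso (\<gamma> a)"
  using assms unfolding normal_cone_def by simp_all

lemma normal_cone_cone_of: "normal_cone (cone_of (u::'a)) (rId (gunit u))"
proof -
  have "mcomp (minc a b) (cone_of u b) = cone_of u a"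
    if "a \<in> R_obj" "b \<in> R_obj" "a \<subseteq> b" for a b :: "'a set"
    using that unfolding minc_def cone_of_def by (simp add: mcomp_restrict)
  then show ?thesis unfolding normal_cone_def
    using R_objI[OF idem_gunit] cone_of_in_R_hom R_iso_cone_of_gunit
    by (auto simp: cone_of_def intro!: bexI[of _ "rId (gunit u)"])
qed

lemma apex_eqI:
  assumes "normal_cone \<gamma> (c::'a set)"
  shows "apex \<gamma> = c"
  unfolding apex_def
proof (rule the_equality)
  fix c' assume "normal_cone \<gamma> c'"
  moreover obtain a :: "'a set" where "a \<in> R_obj" using normal_coneD(5)[OF assms] by blast
  ultimately show "c' = c" using assms normal_coneD(3) R_hom_msrc_mtgt by metis
qed (rule assms)

lemma apex_cone_of: "apex (cone_of (u::'a)) = rId (gunit u)"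
  by (rule apex_eqI[OF normal_cone_cone_of])

lemma normal_cone_mfun_mono:
  assumes "normal_cone \<gamma> c" "a \<in> R_obj" "b \<in> R_obj" "a \<subseteq> b" "x \<in> a"
  shows "mfun (\<gamma> a) x = mfun (\<gamma> b) x"
  using normal_coneD(4)[OF assms(1-4), symmetric] assms(5)
  unfolding mcomp_def minc_def mfun_def msrc_def by simp

text \<open>Isomorphic principal right ideals coincide, so an isomorphism of \<open>\<R>(S)\<close> is an
  automorphism \<open>lam g v g\<close> with \<open>v\<close> in the maximal subgroup at \<open>g\<close>.\<close>

lemma R_isoE:
  assumes "R_iso (m::'a mor)"
  obtains g v where "idem g" "m = lam g v g" "g * v = v" "v * g = v" "gunit v = g"
proof -
  obtain g f n where gf: "idem g" "idem f" and m: "m \<in> R_hom (rId g) (rId f)"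
    and n: "n \<in> R_hom (rId f) (rId g)"
    and mn: "mcomp m n = minc (rId g) (rId g)" and nm: "mcomp n m = minc (rId f) (rId f)"
    using assms unfolding R_iso_def by (auto elim!: R_objE)
  obtain v where v: "m = lam g v f" "f * v = v" "v * g = v" using R_hom_rIdE[OF gf m] .
  obtain w where w: "n = lam f w g" "g * w = w" "w * f = w" using R_hom_rIdE[OF gf(2,1) n] .
  have "lam g (w * v) g = lam g g g"
    using mn v w lam_idem[OF gf(1)] mcomp_lam by simp
  then have wv: "w * v = g"
    using lam_inj[OF gf(1,1,1,1)] v(3) gf(1) unfolding idem_def by (metis mult.assoc)
  have "lam f (v * w) f = lam f f f"
    using nm v w lam_idem[OF gf(2)] mcomp_lam by simp
  then have vw: "v * w = f"
    using lam_inj[OF gf(2,2,2,2)] w(3) gf(2) unfolding idem_def by (metis mult.assoc)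
  have "g = f * g" using wv v(2) w(3) idem_central[OF gf(2), of w] by (metis mult.assoc)
  moreover have "f = g * f" using vw w(2) v(3) idem_central[OF gf(1), of v] by (metis mult.assoc)
  ultimately have "g = f" using idem_central[OF gf(1), of f] by simp
  then show ?thesis
    using that gf(1) v w gunit_unique[OF gf(1), of v w] vw by simp
qed

lemma normal_cone_eq_cone_of:
  assumes "normal_cone \<gamma> c"
  obtains v :: 'a where "\<gamma> = cone_of v"
proof -
  obtain a0 where "a0 \<in> R_obj" "R_iso (\<gamma> a0)" using normal_coneD(5)[OF assms] by blast
  then obtain g v where g: "idem g" "\<gamma> a0 = lam g v g" "g * v = v" "v * g = v" "gunit v = g"
    by (elim R_isoE)
  with normal_coneD(3)[OF assms \<open>a0 \<in> R_obj\<close>] have "a0 = rId g" "c = rId g"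
    using R_hom_msrc_mtgt[of "\<gamma> a0"] unfolding lam_def msrc_def mtgt_def by auto
  have "\<gamma> a = cone_of v a" if "a \<in> R_obj" for a
  proof -
    obtain e where e: "idem e" and a: "a = rId e" using \<open>a \<in> R_obj\<close> by (rule R_objE)
    obtain p where p: "\<gamma> (rId e) = lam e p g" "g * p = p" "p * e = p"
      using normal_coneD(3)[OF assms R_objI[OF e]] \<open>c = rId g\<close> R_hom_rIdE[OF e g(1)] by metis
    \<comment> \<open>compare the components at \<open>eS\<close> and \<open>gS\<close> on their common subobject \<open>egS\<close>\<close>
    have eg: "idem (e * g)" "e * g \<in> rId (e * g)"
      using idem_mult[OF e g(1)] idem_in_rId by blast+
    have sub: "rId (e * g) \<subseteq> rId e" "rId (e * g) \<subseteq> rId g"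
      using rId_mult_subset[of e g] rId_mult_subset[of g e] idem_central[OF g(1), of e] by simp_all
    have "p * (e * g) = v * (e * g)"
      using normal_cone_mfun_mono[OF assms R_objI[OF eg(1)] R_objI[OF e] sub(1) eg(2)]
        normal_cone_mfun_mono[OF assms R_objI[OF eg(1)] R_objI[OF g(1)] sub(2) eg(2)]
        p(1) g(2) \<open>a0 = rId g\<close> eg(2) sub mfun_lam by (metis subsetD)
    then have "p = v * e"
      using p(2,3) g(4) idem_central[OF g(1)] by (metis mult.assoc)
    then show ?thesis using p(1) cone_of_rId[OF e] g(5) a by simp
  qed
  then have "\<gamma> = cone_of v"
    using normal_coneD(2)[OF assms] by (auto simp: cone_of_def)
  then show ?thesis by (rule that)
qed

lemma TR_eq_range_cone_of: "TR = range (cone_of :: 'a \<Rightarrow> 'a cone)"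
  unfolding TR_def using normal_cone_cone_of normal_cone_eq_cone_of by blast

lemma inj_cone_of: "inj (cone_of :: 'a \<Rightarrow> 'a cone)"
proof (rule injI)
  fix u u' :: 'a assume eq: "cone_of u = cone_of u'"
  have "rId (gunit u) = rId (gunit u')" using arg_cong[OF eq, of apex] by (simp add: apex_cone_of)
  then have g: "gunit u = gunit u'" by (rule rId_idem_inj[OF idem_gunit idem_gunit])
  have val: "mfun (cone_of w (rId (gunit w))) (gunit w) = w" for w :: 'a
    using cone_of_rId[OF idem_gunit] mfun_lam[OF idem_in_rId[OF idem_gunit]]
    by (simp add: mult_gunit_right)
  have "u = mfun (cone_of u (rId (gunit u))) (gunit u)" by (rule val[symmetric])
  also have "\<dots> = mfun (cone_of u' (rId (gunit u'))) (gunit u')" by (simp only: eq g)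
  finally show "u = u'" by (simp only: val)
qed

lemma bij_cone_of: "bij_betw (cone_of :: 'a \<Rightarrow> 'a cone) UNIV TR"
  unfolding bij_betw_def by (simp add: inj_cone_of TR_eq_range_cone_of)

lemma cone_star_cone_of:
  assumes "v * gunit u = (v::'a)"
  shows "cone_star (cone_of u) (lam (gunit u) v (gunit v)) = cone_of (v * u)"
proof -
  have "rId v = rId (v * u)"
    using rId_mult_subset[of "v * u" "ginv u"] rId_mult_subset[of v u] assms
    unfolding gunit_def by (simp add: mult.assoc)
  then have "rId (gunit v) = rId (gunit (v * u))" by (simp add: rId_gunit)
  moreover have "(\<lambda>x. u * x) ` a \<subseteq> rId (gunit u)" for a
    using mem_rId_idem[OF idem_gunit] gunit_mult_left by (auto simp flip: mult.assoc)
  ultimately show ?thesis unfolding cone_star_def cone_of_def lam_def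
    by (intro ext) (simp add: mcomp_restrict comp_def flip: mult.assoc)
qed

lemma cone_of_mult: "cone_of ((x::'a) * y) = cone_mult (cone_of y) (cone_of x)"
proof -
  let ?e = "gunit y"
  have xe: "x * ?e * ?e = x * ?e" using idem_gunit[of y] unfolding idem_def by (simp add: mult.assoc)
  have "gunit x * (x * ?e) = x * ?e" by (simp add: gunit_mult_left flip: mult.assoc)
  then have "epi_comp (cone_of x (rId ?e)) = lam ?e (x * ?e) (gunit (x * ?e))"
    using epi_comp_lam[OF idem_gunit idem_gunit _ xe] cone_of_rId[OF idem_gunit] by simp
  moreover have "x * ?e * y = x * y" by (simp add: gunit_mult_left mult.assoc)
  ultimately show ?thesis
    using cone_star_cone_of[OF xe]
    unfolding cone_mult_def cone_star_def[symmetric] apex_cone_of by simp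
qed

lemma inv_cone_of [simp]: "inv cone_of (cone_of (u::'a)) = u"
  using inj_cone_of by simp

lemma cone_of_eq_iff [simp]: "cone_of (u::'a) = cone_of v \<longleftrightarrow> u = v"
  using inj_cone_of by (auto dest: injD)

section \<open>The normal dual\<close>

text \<open>A morphism out of the apex of \<open>cone_of u\<close> is some \<open>lam (gunit u) v h\<close>, and the cone it
  induces is \<open>cone_of (v * u)\<close>; as \<open>v\<close> ranges over \<open>hS \<inter> S (gunit u)\<close> so does \<open>v * u\<close>.\<close>

lemma Hset_cone_of:
  assumes "d \<in> R_obj"
  shows "Hset (cone_of (u::'a)) d = cone_of ` (d \<inter> lId (gunit u))"
proof -
  obtain h where h: "idem h" "d = rId h" using assms by (rule R_objE)
  let ?g = "gunit u"
  have cone_star_lam: "cone_star (cone_of u) (epi_comp (lam ?g v h)) = cone_of (v * u)"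
    if "h * v = v" "v * ?g = v" for v
    using epi_comp_lam[OF idem_gunit h(1) that] cone_star_cone_of[OF that(2)] by simp
  show ?thesis
  proof
    show "Hset (cone_of u) d \<subseteq> cone_of ` (d \<inter> lId ?g)"
    proof
      fix x assume "x \<in> Hset (cone_of u) d"
      then obtain f where "f \<in> R_hom (rId ?g) (rId h)" "x = cone_star (cone_of u) (epi_comp f)"
        unfolding Hset_def apex_cone_of h by blast
      moreover obtain v where "f = lam ?g v h" "h * v = v" "v * ?g = v"
        using R_hom_rIdE[OF idem_gunit h(1) calculation(1)] .
      moreover have "h * (v * u) = v * u" "v * u * ?g = v * u"
        using calculation(4) by (simp flip: mult.assoc) (simp add: mult.assoc mult_gunit_right)
      then have "v * u \<in> d \<inter> lId ?g"
        using h mem_rId_idem mem_lId_idem[OF idem_gunit] by simp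
      ultimately show "x \<in> cone_of ` (d \<inter> lId ?g)" using cone_star_lam by auto
    qed
  next
    show "cone_of ` (d \<inter> lId ?g) \<subseteq> Hset (cone_of u) d"
    proof
      fix x assume "x \<in> cone_of ` (d \<inter> lId ?g)"
      then obtain w where w: "x = cone_of w" "h * w = w" "w * ?g = w"
        using h mem_rId_idem mem_lId_idem[OF idem_gunit] by blast
      define v where "v = w * ginv u"
      have v: "h * v = v" "v * ?g = v" "v * u = w"
        unfolding v_def using w(2,3) ginv_mult_gunit ginv_mult
        by (simp_all add: mult.assoc[symmetric]) (simp_all add: mult.assoc)
      then have "x = cone_star (cone_of u) (epi_comp (lam ?g v h))"
        using cone_star_lam w(1) by simp
      then show "x \<in> Hset (cone_of u) d"
        unfolding Hset_def apex_cone_of h using R_homI[OF idem_gunit h(1) v(1,2)] by blast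
    qed
  qed
qed

lemma Hmap_cone_of:
  assumes g: "(g::'a mor) \<in> R_mor" and x: "x \<in> Hset (cone_of u) (msrc g)"
  shows "Hmap (cone_of u) g x = cone_of (mfun g (inv cone_of x))"
proof -
  obtain h k t where hk: "idem h" "idem k" "g = lam h t k" "k * t = t" "t * h = t"
    using g by (rule R_morE)
  let ?g = "gunit u"
  define P where "P = (\<lambda>f. f \<in> R_hom (apex (cone_of u)) (msrc g) \<and> x = cone_star (cone_of u) (epi_comp f))"
  define F where "F = (SOME f. P f)"
  have "P F" unfolding F_def by (rule someI_ex) (use x in \<open>auto simp: Hset_def P_def\<close>)
  then have F: "F \<in> R_hom (rId ?g) (rId h)" "x = cone_star (cone_of u) (epi_comp F)"
    unfolding P_def apex_cone_of hk(3) by simp_all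
  obtain v where v: "F = lam ?g v h" "h * v = v" "v * ?g = v"
    using R_hom_rIdE[OF idem_gunit hk(1) F(1)] .
  have x_eq: "x = cone_of (v * u)"
    using F(2) epi_comp_lam[OF idem_gunit hk(1) v(2,3)] cone_star_cone_of[OF v(3)] v(1) by simp
  have tv: "k * (t * v) = t * v" "t * v * ?g = t * v"
    using hk(4) v(3) by (simp_all add: mult.assoc[symmetric]) (simp add: mult.assoc)
  have "Hmap (cone_of u) g x = cone_star (cone_of u) (epi_comp (mcomp F g))"
    unfolding Hmap_def F_def P_def using x by simp
  also have "\<dots> = cone_of (t * v * u)"
    using mcomp_lam[OF v(2)] epi_comp_lam[OF idem_gunit hk(2) tv] cone_star_cone_of[OF tv(2)]
      v(1) hk(3) by simp
  also have "\<dots> = cone_of (mfun g (inv cone_of x))"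
  proof -
    have vu: "v * u \<in> rId h" using mem_rId_idem[OF hk(1)] v(2) by (simp flip: mult.assoc)
    then show ?thesis using x_eq hk(3) mfun_lam[OF vu] by (simp add: mult.assoc)
  qed
  finally show ?thesis .
qed

lemma Hfun_cone_of_gunit: "Hfun (cone_of (u::'a)) = Hfun (cone_of (gunit u))"
proof -
  have Hset_eq: "Hset (cone_of u) d = Hset (cone_of (gunit u)) d" if "d \<in> R_obj" for d
    using Hset_cone_of[OF that] gunit_idem[OF idem_gunit] by simp
  have "Hmap (cone_of u) g = Hmap (cone_of (gunit u)) g" if g: "g \<in> R_mor" for g
  proof -
    have "msrc g \<in> R_obj" using g by (auto elim!: R_morE intro: R_objI)
    then show ?thesis
      using Hset_eq Hmap_cone_of[OF g, unfolded Hmap_def] unfolding Hmap_def by (intro ext) simp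
  qed
  then show ?thesis unfolding Hfun_def using Hset_eq by (auto intro!: ext)
qed

end

definition idem_gen :: "'a::semigroup_mult set \<Rightarrow> 'a" where
  "idem_gen A = (SOME e. idem e \<and> A = lId e)"

definition dual_obj :: "'a::semigroup_mult set \<Rightarrow> 'a nobj" where
  "dual_obj A = Hfun (cone_of (idem_gen A))"

definition right_transl :: "'a::semigroup_mult set \<Rightarrow> 'a \<Rightarrow> 'a set \<Rightarrow> 'a cone \<Rightarrow> 'a cone" where
  "right_transl A u = (\<lambda>d. if d \<in> R_obj
     then restrict (\<lambda>x. cone_of (inv cone_of x * u)) (fst (dual_obj A) d) else undefined)"

definition dual_mor :: "'a::semigroup_mult mor \<Rightarrow> 'a nmor" where
  "dual_mor m = (dual_obj (msrc m), dual_obj (mtgt m),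
     right_transl (msrc m) (mfun m (idem_gen (msrc m))))"

context clifford
begin

lemma idem_gen_lId: "idem (e::'a) \<Longrightarrow> idem_gen (lId e) = e"
  unfolding idem_gen_def by (rule some_equality) (auto dest: lId_idem_inj)

lemma dual_obj_lId: "idem (e::'a) \<Longrightarrow> dual_obj (lId e) = Hfun (cone_of e)"
  unfolding dual_obj_def by (simp add: idem_gen_lId)

lemma fst_dual_obj:
  "idem (e::'a) \<Longrightarrow> d \<in> R_obj \<Longrightarrow> fst (dual_obj (lId e)) d = cone_of ` (d \<inter> lId e)"
  by (simp add: dual_obj_lId Hfun_def Hset_cone_of gunit_idem)

lemma cone_of_in_dual_obj:
  "idem (e::'a) \<Longrightarrow> d \<in> R_obj \<Longrightarrow> w \<in> d \<Longrightarrow> w * e = w \<Longrightarrow> cone_of w \<in> fst (dual_obj (lId e)) d"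
  by (simp add: fst_dual_obj mem_lId_idem)

lemma in_dual_objE:
  assumes "idem (e::'a)" "d \<in> R_obj" "x \<in> fst (dual_obj (lId e)) d"
  obtains w where "x = cone_of w" "w \<in> d" "w * e = w"
  using assms by (auto simp: fst_dual_obj mem_lId_idem)

lemma snd_dual_obj:
  assumes "idem (e::'a)" "g \<in> R_mor" "x \<in> fst (dual_obj (lId e)) (msrc g)"
  shows "snd (dual_obj (lId e)) g x = cone_of (mfun g (inv cone_of x))"
proof -
  have "msrc g \<in> R_obj" using assms(2) by (auto elim!: R_morE intro: R_objI)
  then show ?thesis
    using assms Hmap_cone_of by (simp add: dual_obj_lId Hfun_def)
qed

lemma N_le_dual_obj_iff:
  assumes "idem (e::'a)" "idem f"
  shows "N_le (dual_obj (lId e)) (dual_obj (lId f)) \<longleftrightarrow> lId e \<subseteq> lId f"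
proof
  assume "N_le (dual_obj (lId e)) (dual_obj (lId f))"
  then have "cone_of e \<in> fst (dual_obj (lId f)) (rId e)"
    using cone_of_in_dual_obj[OF assms(1) R_objI[OF assms(1)] idem_in_rId[OF assms(1)]]
      assms(1) R_objI[OF assms(1)] unfolding N_le_def idem_def by blast
  then have "e * f = e"
    using assms R_objI by (auto simp: fst_dual_obj mem_lId_idem)
  then show "lId e \<subseteq> lId f"
    using assms by (auto simp: mem_lId_idem) (metis mult.assoc)
next
  assume "lId e \<subseteq> lId f"
  then show "N_le (dual_obj (lId e)) (dual_obj (lId f))"
    unfolding N_le_def using assms by (auto simp: fst_dual_obj)
qed

lemma dual_obj_in_N_obj: "idem (e::'a) \<Longrightarrow> dual_obj (lId e) \<in> N_obj"
  unfolding N_obj_def TR_eq_range_cone_of by (simp add: dual_obj_lId)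

lemma N_objE:
  assumes "(F::'a nobj) \<in> N_obj"
  obtains e where "idem e" "F = dual_obj (lId e)"
proof -
  obtain u :: 'a where "F = Hfun (cone_of u)"
    using assms unfolding N_obj_def TR_eq_range_cone_of by blast
  then show ?thesis using that idem_gunit Hfun_cone_of_gunit dual_obj_lId by metis
qed

lemma bij_betw_dual_obj: "bij_betw (dual_obj :: 'a set \<Rightarrow> 'a nobj) L_obj N_obj"
  unfolding bij_betw_def
proof
  show "inj_on (dual_obj :: 'a set \<Rightarrow> 'a nobj) L_obj"
  proof (rule inj_onI)
    fix A B :: "'a set" assume "A \<in> L_obj" "B \<in> L_obj" and eq: "dual_obj A = dual_obj B"
    obtain e f where "idem e" "idem f" "A = lId e" "B = lId f"
      using \<open>A \<in> L_obj\<close> \<open>B \<in> L_obj\<close> by (metis L_objE)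
    then show "A = B" using eq N_le_dual_obj_iff unfolding N_le_def by (metis order_refl subset_antisym)
  qed
  show "dual_obj ` L_obj = (N_obj :: 'a nobj set)"
  proof
    show "dual_obj ` L_obj \<subseteq> (N_obj :: 'a nobj set)"
      using dual_obj_in_N_obj by (auto elim: L_objE)
    show "N_obj \<subseteq> dual_obj ` (L_obj :: 'a set set)"
    proof
      fix F :: "'a nobj" assume "F \<in> N_obj"
      then obtain e where "idem e" "F = dual_obj (lId e)" by (rule N_objE)
      then show "F \<in> dual_obj ` L_obj" using L_objI by blast
    qed
  qed
qed

lemma dual_mor_rho:
  assumes "idem (e::'a)" "e * u = u"
  shows "dual_mor (rho e u f) = (dual_obj (lId e), dual_obj (lId f), right_transl (lId e) u)"
proof -
  have "mfun (rho e u f) e = u"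
    using assms mem_lId_idem[OF assms(1), of e] unfolding rho_def mfun_def idem_def by simp
  then show ?thesis unfolding dual_mor_def
    by (simp add: rho_def msrc_def mtgt_def idem_gen_lId[OF assms(1)])
qed

lemma right_transl_cone_of:
  assumes "idem (e::'a)" "d \<in> R_obj" "w \<in> d" "w * e = w"
  shows "right_transl (lId e) u d (cone_of w) = cone_of (w * u)"
  using cone_of_in_dual_obj[OF assms] assms(2) unfolding right_transl_def by simp

lemma right_transl_eqI:
  assumes "idem (e::'a)"
    and "\<And>d. d \<notin> R_obj \<Longrightarrow> \<tau> d = undefined"
    and "\<And>d. d \<in> R_obj \<Longrightarrow> \<tau> d \<in> extensional (fst (dual_obj (lId e)) d)"
    and "\<And>d w. d \<in> R_obj \<Longrightarrow> w \<in> d \<Longrightarrow> w * e = w \<Longrightarrow> \<tau> d (cone_of w) = cone_of (w * u)"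
  shows "right_transl (lId e) u = \<tau>"
proof (rule ext)
  fix d show "right_transl (lId e) u d = \<tau> d"
  proof (cases "d \<in> R_obj")
    case True
    show ?thesis
    proof (rule extensionalityI[OF _ assms(3)[OF True]])
      show "right_transl (lId e) u d \<in> extensional (fst (dual_obj (lId e)) d)"
        unfolding right_transl_def using True by simp
      fix x assume "x \<in> fst (dual_obj (lId e)) d"
      then obtain w where "x = cone_of w" "w \<in> d" "w * e = w"
        using in_dual_objE[OF assms(1) True] by metis
      then show "right_transl (lId e) u d x = \<tau> d x"
        using assms(4) True right_transl_cone_of[OF assms(1) True] by simp
    qed
  qed (simp add: assms(2) right_transl_def)
qed

lemma snd_dual_obj_cone_of:
  assumes "idem (e::'a)" "d \<in> R_obj" "d' \<in> R_obj" "g \<in> R_hom d d'" "w \<in> d" "w * e = w"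
  shows "snd (dual_obj (lId e)) g (cone_of w) = cone_of (mfun g w)"
  using snd_dual_obj[OF assms(1) R_morI[OF assms(2-4)]] cone_of_in_dual_obj[OF assms(1,2,5,6)]
    R_hom_msrc_mtgt[OF assms(4)] by simp

lemma dual_mor_in_N_hom:
  assumes "idem (e::'a)" "idem f" "e * u = u" "u * f = u"
  shows "dual_mor (rho e u f) \<in> N_hom (dual_obj (lId e)) (dual_obj (lId f))"
proof -
  let ?\<sigma> = "right_transl (lId e) u"
  have "?\<sigma> d \<in> fst (dual_obj (lId e)) d \<rightarrow> fst (dual_obj (lId f)) d" if d: "d \<in> R_obj" for d
  proof
    fix x assume "x \<in> fst (dual_obj (lId e)) d"
    then obtain w where w: "x = cone_of w" "w \<in> d" "w * e = w"
      using in_dual_objE[OF assms(1) d] by metis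
    have "w * u * f = w * u" using assms(4) by (simp add: mult.assoc)
    then show "?\<sigma> d x \<in> fst (dual_obj (lId f)) d"
      using w right_transl_cone_of[OF assms(1) d w(2,3)]
        cone_of_in_dual_obj[OF assms(2) d R_obj_mult_right[OF d w(2)]] by simp
  qed
  moreover have "snd (dual_obj (lId f)) g (?\<sigma> d x) = ?\<sigma> d' (snd (dual_obj (lId e)) g x)"
    if hyps: "d \<in> R_obj" "d' \<in> R_obj" "g \<in> R_hom d d'" "x \<in> fst (dual_obj (lId e)) d"
    for d d' g x
  proof -
    obtain w where w: "x = cone_of w" "w \<in> d" "w * e = w"
      using in_dual_objE[OF assms(1) hyps(1,4)] .
    have "w * u * f = w * u" using assms(4) by (simp add: mult.assoc)
    moreover have "mfun g w * e = mfun g w" using mfun_R_hom(2)[OF hyps(3) w(2), of e] w(3) by simp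
    ultimately show ?thesis
      using hyps w mfun_R_hom[OF hyps(3)] assms(1,2) R_obj_mult_right
      by (simp add: right_transl_cone_of snd_dual_obj_cone_of)
  qed
  ultimately show ?thesis
    unfolding N_hom_def dual_mor_rho[OF assms(1,3)] by (auto simp: right_transl_def)
qed

text \<open>Yoneda: a natural transformation out of \<open>dual_obj (lId e)\<close> is determined by the image
  \<open>cone_of u\<close> of \<open>cone_of e\<close>, and it is then right translation by \<open>u\<close>.\<close>

lemma N_hom_dual_objE:
  assumes "idem (e::'a)" "idem f" "X \<in> N_hom (dual_obj (lId e)) (dual_obj (lId f))"
  obtains u where "e * u = u" "u * f = u" "X = dual_mor (rho e u f)"
proof -
  let ?F = "dual_obj (lId e)" and ?G = "dual_obj (lId f)"
  obtain \<sigma> where X: "X = (?F, ?G, \<sigma>)"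
    and \<sigma>_undef: "\<And>d. d \<notin> R_obj \<Longrightarrow> \<sigma> d = undefined"
    and \<sigma>_ext: "\<And>d. d \<in> R_obj \<Longrightarrow> \<sigma> d \<in> extensional (fst ?F d) \<and> \<sigma> d \<in> fst ?F d \<rightarrow> fst ?G d"
    and \<sigma>_nat: "\<And>d d' g x. d \<in> R_obj \<Longrightarrow> d' \<in> R_obj \<Longrightarrow> g \<in> R_hom d d' \<Longrightarrow> x \<in> fst ?F d \<Longrightarrow>
        snd ?G g (\<sigma> d x) = \<sigma> d' (snd ?F g x)"
    using assms(3) unfolding N_hom_def by blast
  have eS: "rId e \<in> R_obj" "e \<in> rId e" "e * e = e"
    using R_objI idem_in_rId assms(1) unfolding idem_def by blast+
  have "\<sigma> (rId e) (cone_of e) \<in> fst ?G (rId e)"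
    using \<sigma>_ext[OF eS(1)] cone_of_in_dual_obj[OF assms(1) eS] by blast
  then obtain u where u: "\<sigma> (rId e) (cone_of e) = cone_of u" "u \<in> rId e" "u * f = u"
    using in_dual_objE[OF assms(2) eS(1)] by metis
  have "\<sigma> d (cone_of w) = cone_of (w * u)" if d: "d \<in> R_obj" and w: "w \<in> d" "w * e = w" for d w
  proof -
    obtain h where h: "idem h" "d = rId h" using d by (rule R_objE)
    let ?g = "lam e w h"
    have g: "?g \<in> R_hom (rId e) d"
      using R_homI[OF assms(1) h(1) _ w(2)] w(1) h mem_rId_idem by simp
    have "snd ?F ?g (cone_of e) = cone_of w"
      using snd_dual_obj_cone_of[OF assms(1) eS(1) d g eS(2,3)] mfun_lam[OF eS(2)] w(2) by simp
    moreover have "snd ?G ?g (cone_of u) = cone_of (w * u)"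
      using snd_dual_obj_cone_of[OF assms(2) eS(1) d g u(2,3)] mfun_lam[OF u(2)] by simp
    ultimately show ?thesis
      using \<sigma>_nat[OF eS(1) d g cone_of_in_dual_obj[OF assms(1) eS]] u(1) by simp
  qed
  then have "right_transl (lId e) u = \<sigma>"
    using right_transl_eqI[OF assms(1)] \<sigma>_undef \<sigma>_ext by blast
  moreover have "e * u = u" using u(2) mem_rId_idem[OF assms(1)] by simp
  ultimately show ?thesis using that u(3) X dual_mor_rho[OF assms(1)] by simp
qed

lemma inj_on_dual_mor: "inj_on (dual_mor :: 'a mor \<Rightarrow> 'a nmor) L_mor"
proof (rule inj_onI)
  fix m m' :: "'a mor" assume "m \<in> L_mor" "m' \<in> L_mor" and eq: "dual_mor m = dual_mor m'"
  obtain e f u where m: "idem e" "idem f" "m = rho e u f" "e * u = u" "u * f = u"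
    using \<open>m \<in> L_mor\<close> by (rule L_morE)
  obtain e' f' u' where m': "idem e'" "idem f'" "m' = rho e' u' f'" "e' * u' = u'" "u' * f' = u'"
    using \<open>m' \<in> L_mor\<close> by (rule L_morE)
  have "dual_obj (lId e) = dual_obj (lId e')" "dual_obj (lId f) = dual_obj (lId f')"
    and \<sigma>: "right_transl (lId e) u = right_transl (lId e') u'"
    using eq unfolding m(3) m'(3) dual_mor_rho[OF m(1,4)] dual_mor_rho[OF m'(1,4)] by simp_all
  then have "lId e = lId e'" "lId f = lId f'"
    using bij_betw_dual_obj L_objI m(1,2) m'(1,2) unfolding bij_betw_def inj_on_def by blast+
  then have "e = e'" "f = f'" using lId_idem_inj m(1,2) m'(1,2) by blast+
  have e: "rId e \<in> R_obj" "e \<in> rId e" "e * e = e"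
    using m(1) R_objI idem_in_rId unfolding idem_def by blast+
  have "cone_of (e * u) = right_transl (lId e) u (rId e) (cone_of e)"
    using right_transl_cone_of[OF m(1) e] by simp
  also have "\<dots> = cone_of (e * u')"
    using \<sigma> right_transl_cone_of[OF m(1) e] \<open>e = e'\<close> by simp
  finally have "u = u'" using m(4) m'(4) \<open>e = e'\<close> by simp
  then show "m = m'" using m(3) m'(3) \<open>e = e'\<close> \<open>f = f'\<close> by simp
qed

lemma dual_mor_image: "dual_mor ` L_mor = (N_mor :: 'a nmor set)"
proof
  show "dual_mor ` L_mor \<subseteq> (N_mor :: 'a nmor set)"
  proof
    fix X :: "'a nmor" assume "X \<in> dual_mor ` L_mor"
    then obtain e f u where "idem e" "idem f" "e * u = u" "u * f = u" "X = dual_mor (rho e u f)"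
      by (auto elim!: L_morE)
    then show "X \<in> N_mor"
      unfolding N_mor_def using dual_mor_in_N_hom dual_obj_in_N_obj by blast
  qed
  show "N_mor \<subseteq> dual_mor ` (L_mor :: 'a mor set)"
  proof
    fix X :: "'a nmor" assume "X \<in> N_mor"
    then obtain e f where ef: "idem e" "idem f" "X \<in> N_hom (dual_obj (lId e)) (dual_obj (lId f))"
      unfolding N_mor_def by (auto elim!: N_objE)
    then obtain u where "e * u = u" "u * f = u" "X = dual_mor (rho e u f)"
      by (rule N_hom_dual_objE)
    moreover have "rho e u f \<in> L_mor"
      unfolding L_mor_def using L_homI[OF ef(1,2) calculation(1,2)] L_objI ef(1,2) by blast
    ultimately show "X \<in> dual_mor ` L_mor" by blast
  qed
qed

lemma bij_betw_dual_mor: "bij_betw (dual_mor :: 'a mor \<Rightarrow> 'a nmor) L_mor N_mor"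
  unfolding bij_betw_def using inj_on_dual_mor dual_mor_image by blast

lemma dual_mor_mcomp:
  assumes "m \<in> L_hom A B" "n \<in> L_hom B C" "A \<in> L_obj" "B \<in> L_obj" "(C::'a set) \<in> L_obj"
  shows "dual_mor (mcomp m n) = N_comp (dual_mor m) (dual_mor n)"
proof -
  obtain e f h where efh: "idem e" "idem f" "idem h" "A = lId e" "B = lId f" "C = lId h"
    using assms(3-5) by (auto elim!: L_objE)
  obtain u where u: "m = rho e u f" "e * u = u" "u * f = u"
    using L_hom_lIdE[OF efh(1,2)] assms(1) efh by metis
  obtain v where v: "n = rho f v h" "f * v = v" "v * h = v"
    using L_hom_lIdE[OF efh(2,3)] assms(2) efh by metis
  have "e * (u * v) = u * v" using u(2) by (simp flip: mult.assoc)
  moreover have "right_transl (lId e) (u * v) = (\<lambda>d. if d \<in> R_obj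
      then restrict (right_transl (lId f) v d \<circ> right_transl (lId e) u d) (fst (dual_obj (lId e)) d)
      else undefined)"
    using efh(1,2) u(3) R_obj_mult_right cone_of_in_dual_obj
    by (intro right_transl_eqI) (auto simp: right_transl_cone_of mult.assoc)
  moreover have "N_comp (dual_mor m) (dual_mor n) = (dual_obj (lId e), dual_obj (lId h),
      \<lambda>d. if d \<in> R_obj
        then restrict (right_transl (lId f) v d \<circ> right_transl (lId e) u d) (fst (dual_obj (lId e)) d)
        else undefined)"
    unfolding N_comp_def u(1) v(1) dual_mor_rho[OF efh(1) u(2)] dual_mor_rho[OF efh(2) v(2)] prod.sel
    by (rule refl)
  ultimately show ?thesis
    unfolding u(1) v(1) mcomp_rho[OF u(3)] using dual_mor_rho[OF efh(1)] by simp
qed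

lemma dual_mor_minc:
  assumes "idem (e::'a)" "idem f"
  shows "dual_mor (minc (lId e) (lId f)) = N_inc (dual_obj (lId e)) (dual_obj (lId f))"
proof -
  have "right_transl (lId e) e
      = (\<lambda>d. if d \<in> R_obj then restrict id (fst (dual_obj (lId e)) d) else undefined)"
    using assms(1) cone_of_in_dual_obj by (intro right_transl_eqI) auto
  then show ?thesis
    using dual_mor_rho[OF assms(1), of e f] assms(1)
    unfolding minc_lId[OF assms(1)] N_inc_def idem_def by simp
qed

lemma normal_cat_iso_dual: "normal_cat_iso (dual_obj :: 'a set \<Rightarrow> 'a nobj) dual_mor"
  unfolding normal_cat_iso_def
proof (intro conjI ballI bij_betw_dual_obj bij_betw_dual_mor)
  fix A B :: "'a set" assume "A \<in> L_obj" "B \<in> L_obj"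
  then obtain e f where ef: "idem e" "idem f" "A = lId e" "B = lId f" by (auto elim!: L_objE)
  show "\<And>m. m \<in> L_hom A B \<Longrightarrow> dual_mor m \<in> N_hom (dual_obj A) (dual_obj B)"
    using dual_mor_in_N_hom ef L_hom_lIdE[OF ef(1,2)] by metis
  show "\<And>C m n. C \<in> L_obj \<Longrightarrow> m \<in> L_hom A B \<Longrightarrow> n \<in> L_hom B C \<Longrightarrow>
      dual_mor (mcomp m n) = N_comp (dual_mor m) (dual_mor n)"
    using dual_mor_mcomp \<open>A \<in> L_obj\<close> \<open>B \<in> L_obj\<close> by blast
  show "(A \<subseteq> B) = N_le (dual_obj A) (dual_obj B)"
    using N_le_dual_obj_iff ef by simp
  show "A \<subseteq> B \<longrightarrow> dual_mor (minc A B) = N_inc (dual_obj A) (dual_obj B)"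
    using dual_mor_minc ef by simp
qed

end

theorem mainTheorem7:
  assumes "clifford_semigroup TYPE('a::semigroup_mult)"
  shows "(\<exists>\<phi> :: 'a \<Rightarrow> 'a cone. bij_betw \<phi> UNIV TR
            \<and> (\<forall>x y. \<phi> (x * y) = cone_mult (\<phi> y) (\<phi> x)))
       \<and> (\<exists>(FO :: 'a set \<Rightarrow> 'a nobj) FM. normal_cat_iso FO FM)"
proof -
  interpret clifford "TYPE('a)" by unfold_locales (rule assms)
  show ?thesis using bij_cone_of cone_of_mult normal_cat_iso_dual by blast
qed

end
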